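(* $\mathcal{M}_1\subsetneq\mathcal{M}_0\subsetneq\mathcal{M}$.
   Context: For $z\in\mathbb{D}^*=\{0<|z|<1\}$ let $f(x)=zx$, $g(x)=z(x-1)+1$, and let $\Lambda_z$ be the unique nonempty compact subset of $\mathbb{C}$ with $\Lambda_z=f(\Lambda_z)\cup g(\Lambda_z)$. Define $\mathcal{M}=\{z\in\mathbb{D}^*:\Lambda_z\text{ connected}\}$, $\mathcal{M}_0=\{z\in\mathbb{D}^*:1/2\in\Lambda_z\}$, and $\mathcal{M}_1=\{z\in\mathbb{D}^*:\Lambda_z\text{ connected and full}\}$, where a set is full if its complement in $\mathbb{C}$ is connected. *)

theory Defs
  imports "HOL-Analysis.Analysis"
begin

definition ifs_f :: "complex \<Rightarrow> complex \<Rightarrow> complex" where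
  "ifs_f z x = z * x"

definition ifs_g :: "complex \<Rightarrow> complex \<Rightarrow> complex" where
  "ifs_g z x = z * (x - 1) + 1"

definition attractor :: "complex \<Rightarrow> complex set" where
  "attractor z = (THE S. S \<noteq> {} \<and> compact S \<and> S = ifs_f z ` S \<union> ifs_g z ` S)"

definition punctured_disc :: "complex set" where
  "punctured_disc = {z. 0 < norm z \<and> norm z < 1}"

definition full :: "complex set \<Rightarrow> bool" where
  "full S \<longleftrightarrow> connected (- S)"

definition Mset :: "complex set" where
  "Mset = {z \<in> punctured_disc. connected (attractor z)}"

definition M0set :: "complex set" where
  "M0set = {z \<in> punctured_disc. (1/2 :: complex) \<in> attractor z}"

definition M1set :: "complex set" where
  "M1set = {z \<in> punctured_disc. connected (attractor z) \<and> full (attractor z)}"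

end

theory Submission
  imports Defs
begin

text \<open>In the coordinate \<open>s\<close> with \<open>x = 1/2 + (1 - z)/2 \<cdot> s\<close> the attractor \<open>\<Lambda>\<^sub>z\<close> becomes the set of
  sums \<open>\<Sum> \<plusminus>z\<^sup>n\<close>, the attractor of \<open>s \<mapsto> \<plusminus>1 + z s\<close>, which is symmetric about \<open>0\<close>.  If \<open>0\<close> is such
  a sum, so is \<open>-0\<close> with all signs flipped; hence the two pieces \<open>\<plusminus>1 + z\<Lambda>\<close> meet and \<open>\<Lambda>\<close> is
  connected.  If \<open>\<Lambda>\<close> is connected but misses \<open>0\<close>, it is a continuum symmetric about \<open>0\<close>, so \<open>0\<close>
  lies in a bounded component of its complement and \<open>\<Lambda>\<close> is not full.

  For strictness, two parameters are located as roots of \<open>\<plusminus>1\<close> polynomials by Brouwer's theorem: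
  near \<open>0.549 + 0.386i\<close> the pieces meet but \<open>0 \<notin> \<Lambda>\<close>, and near \<open>0.425 + 0.566i\<close> a periodic sign
  sequence sums to \<open>0\<close> but two cylinders of \<open>\<Lambda>\<close> form a continuum symmetric about
  \<open>z\<^sup>4 - z\<^sup>5 \<notin> \<Lambda>\<close>.  Both non-memberships are certified by a finite search over discs.\<close>

section \<open>Sums of \<open>\<plusminus>z\<^sup>n\<close>\<close>

definition pm :: "bool \<Rightarrow> complex" where
  "pm b = (if b then 1 else -1)"

lemma norm_pm [simp]: "norm (pm b) = 1"
  by (simp add: pm_def)

definition pm_series :: "complex \<Rightarrow> (nat \<Rightarrow> bool) \<Rightarrow> complex" where
  "pm_series z c = (\<Sum>n. pm (c n) * z ^ n)"

definition pm_poly :: "complex \<Rightarrow> (nat \<Rightarrow> bool) \<Rightarrow> nat \<Rightarrow> complex" where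
  "pm_poly z c n = (\<Sum>j<n. pm (c j) * z ^ j)"

definition pm_set :: "complex \<Rightarrow> complex set" where
  "pm_set z = range (pm_series z)"

definition pm_map :: "complex \<Rightarrow> bool \<Rightarrow> complex \<Rightarrow> complex" where
  "pm_map z b x = pm b + z * x"

definition hutchinson :: "complex \<Rightarrow> complex set \<Rightarrow> complex set" where
  "hutchinson z X = pm_map z True ` X \<union> pm_map z False ` X"

lemma continuous_on_pm_map [continuous_intros]: "continuous_on X (pm_map z b)"
  unfolding pm_map_def by (intro continuous_intros)

lemma summable_pm_series:
  assumes "norm z < 1"
  shows "summable (\<lambda>n. pm (c n) * z ^ n)"
proof (rule summable_comparison_test[of _ "\<lambda>n. norm z ^ n"])
  show "\<exists>N. \<forall>n\<ge>N. norm (pm (c n) * z ^ n) \<le> norm z ^ n"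
    by (simp add: norm_mult norm_power)
  show "summable (\<lambda>n. norm z ^ n)"
    using assms by (simp add: summable_geometric)
qed

lemma pm_poly_tendsto:
  assumes "norm z < 1"
  shows "pm_poly z c \<longlonglongrightarrow> pm_series z c"
  unfolding pm_poly_def pm_series_def using summable_LIMSEQ[OF summable_pm_series[OF assms]] .

lemma norm_pm_series_le:
  assumes "norm z < 1"
  shows "norm (pm_series z c) \<le> 1 / (1 - norm z)"
proof -
  have "norm (pm_series z c) \<le> (\<Sum>n. norm (pm (c n) * z ^ n))"
    unfolding pm_series_def
    by (rule summable_norm)
       (use summable_geometric[of "norm z"] assms in
         \<open>auto intro: summable_comparison_test simp: norm_mult norm_power\<close>)
  also have "\<dots> = (\<Sum>n. norm z ^ n)"
    by (simp add: norm_mult norm_power)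
  also have "\<dots> = 1 / (1 - norm z)"
    using assms by (simp add: suminf_geometric)
  finally show ?thesis .
qed

lemma pm_series_Suc:
  assumes "norm z < 1"
  shows "pm_series z c = pm_map z (c 0) (pm_series z (c \<circ> Suc))"
proof -
  have "pm_series z c = pm (c 0) + (\<Sum>n. z * (pm ((c \<circ> Suc) n) * z ^ n))"
    unfolding pm_series_def using suminf_split_head[OF summable_pm_series[OF assms]]
    by (simp add: algebra_simps)
  also have "(\<Sum>n. z * (pm ((c \<circ> Suc) n) * z ^ n)) = z * pm_series z (c \<circ> Suc)"
    unfolding pm_series_def using suminf_mult[OF summable_pm_series[OF assms]] by simp
  finally show ?thesis
    by (simp add: pm_map_def)
qed

lemma pm_series_case_nat:
  assumes "norm z < 1"
  shows "pm_series z (case_nat b c) = pm_map z b (pm_series z c)"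
  using pm_series_Suc[OF assms, of "case_nat b c"] by (simp add: comp_def)

lemma pm_series_split:
  assumes "norm z < 1"
  shows "pm_series z c = pm_poly z c n + z ^ n * pm_series z (\<lambda>k. c (k + n))"
proof (induction n arbitrary: c)
  case 0
  then show ?case by (simp add: pm_poly_def)
next
  case (Suc n)
  have "pm_series z c = pm (c 0) + z * (pm_poly z (c \<circ> Suc) n
                          + z ^ n * pm_series z (\<lambda>k. c (k + Suc n)))"
    using pm_series_Suc[OF assms, of c] Suc[of "c \<circ> Suc"] by (simp add: pm_map_def comp_def)
  also have "\<dots> = pm_poly z c (Suc n) + z ^ Suc n * pm_series z (\<lambda>k. c (k + Suc n))"
    unfolding pm_poly_def
    by (simp only: sum.lessThan_Suc_shift) (simp add: sum_distrib_left algebra_simps)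
  finally show ?case .
qed

lemma pm_series_periodic:
  assumes "norm z < 1" and "\<And>k. c (k + n) = c k"
  shows "(1 - z ^ n) * pm_series z c = pm_poly z c n"
proof -
  have "(\<lambda>k. c (k + n)) = c"
    using assms(2) by blast
  then show ?thesis
    using pm_series_split[OF assms(1), of c n] by (simp add: algebra_simps)
qed

lemma pm_series_eventually_True:
  assumes "norm z < 1" and "\<And>k. k \<ge> n \<Longrightarrow> c k"
  shows "pm_series z c = pm_poly z c n + z ^ n * pm_series z (\<lambda>_. True)"
  using pm_series_split[OF assms(1), of c n] assms(2) by simp

lemma pm_series_uminus:
  assumes "norm z < 1"
  shows "pm_series z (\<lambda>n. \<not> c n) = - pm_series z c"
proof -
  have "(\<lambda>n. pm (\<not> c n) * z ^ n) = (\<lambda>n. - (pm (c n) * z ^ n))"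
    by (auto simp: pm_def)
  then show ?thesis
    unfolding pm_series_def using suminf_minus[OF summable_pm_series[OF assms, of c]] by simp
qed

lemma pm_set_nonempty: "pm_set z \<noteq> {}"
  by (simp add: pm_set_def)

lemma norm_pm_set_le: "norm z < 1 \<Longrightarrow> x \<in> pm_set z \<Longrightarrow> norm x \<le> 1 / (1 - norm z)"
  using norm_pm_series_le by (auto simp: pm_set_def)

lemma norm_pm_set_le_of_norm_le:
  assumes "norm z \<le> u" "u < 1" "x \<in> pm_set z"
  shows "norm x \<le> 1 / (1 - u)"
  using norm_pm_set_le[of z x] assms by (smt (verit) frac_le)

lemma bounded_pm_set: "norm z < 1 \<Longrightarrow> bounded (pm_set z)"
  using norm_pm_set_le by (auto simp: bounded_iff)

lemma uminus_in_pm_set: "norm z < 1 \<Longrightarrow> x \<in> pm_set z \<Longrightarrow> - x \<in> pm_set z"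
  using pm_series_uminus by (auto simp: pm_set_def) (metis rangeI)

lemma pm_poly_plus_in_pm_set:
  assumes z: "norm z < 1" and s: "s \<in> pm_set z"
  shows "pm_poly z w n + z ^ n * s \<in> pm_set z"
proof -
  obtain c where c: "s = pm_series z c"
    using s by (auto simp: pm_set_def)
  define cc where "cc k = (if k < n then w k else c (k - n))" for k
  have "pm_poly z cc n = pm_poly z w n"
    unfolding pm_poly_def by (rule sum.cong) (auto simp: cc_def)
  moreover have "(\<lambda>k. cc (k + n)) = c"
    by (auto simp: cc_def fun_eq_iff)
  ultimately have "pm_series z cc = pm_poly z w n + z ^ n * s"
    using pm_series_split[OF z, of cc n] c by simp
  then show ?thesis
    unfolding pm_set_def by (metis rangeI)
qed

lemma zero_in_pm_set_if_periodic_root: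
  assumes z: "norm z < 1" and "n > 0" and "\<And>k. c (k + n) = c k" and "pm_poly z c n = 0"
  shows "0 \<in> pm_set z"
proof -
  have "norm (z ^ n) < 1"
    using z \<open>n > 0\<close> by (simp add: norm_power power_less_one_iff)
  then have "1 - z ^ n \<noteq> 0"
    by auto
  then have "pm_series z c = 0"
    using pm_series_periodic[where c = c and n = n, OF z assms(3)] assms(4) by simp
  then show ?thesis
    unfolding pm_set_def by (metis rangeI)
qed

lemma pm_set_eq_hutchinson:
  assumes z: "norm z < 1"
  shows "pm_set z = hutchinson z (pm_set z)"
proof
  show "pm_set z \<subseteq> hutchinson z (pm_set z)"
  proof
    fix x assume "x \<in> pm_set z"
    then obtain c where "x = pm_series z c"
      by (auto simp: pm_set_def)
    then show "x \<in> hutchinson z (pm_set z)"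
      using pm_series_Suc[OF z, of c] by (cases "c 0") (auto simp: hutchinson_def pm_set_def)
  qed
  have "pm_map z b (pm_series z c) \<in> pm_set z" for b c
    using pm_series_case_nat[OF z, of b c] unfolding pm_set_def by (metis rangeI)
  then show "hutchinson z (pm_set z) \<subseteq> pm_set z"
    by (auto simp: hutchinson_def pm_set_def)
qed

text \<open>Following preimages backwards in \<open>T\<close> produces a sign sequence whose partial sums
  converge to the starting point.\<close>

lemma subset_pm_set_if_bounded:
  assumes z: "norm z < 1" and bT: "bounded T" and cov: "T \<subseteq> hutchinson z T"
  shows "T \<subseteq> pm_set z"
proof
  fix x assume x: "x \<in> T"
  have "\<exists>p. snd p \<in> T \<and> y = pm_map z (fst p) (snd p)" if "y \<in> T" for y
    using cov that unfolding hutchinson_def by force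
  then obtain prev where prev: "\<And>y. y \<in> T \<Longrightarrow> snd (prev y) \<in> T \<and> y = pm_map z (fst (prev y)) (snd (prev y))"
    by metis
  define xs where "xs = rec_nat x (\<lambda>_ y. snd (prev y))"
  define c where "c k = fst (prev (xs k))" for k
  have xs_T: "xs k \<in> T" for k
    by (induction k) (use x prev in \<open>auto simp: xs_def\<close>)
  have remainder: "x = pm_poly z c N + z ^ N * xs N" for N
  proof (induction N)
    case 0
    then show ?case by (simp add: xs_def pm_poly_def)
  next
    case (Suc N)
    have "xs N = pm (c N) + z * xs (Suc N)"
      using prev[OF xs_T[of N]] by (simp add: c_def xs_def pm_map_def)
    with Suc show ?case
      by (simp add: pm_poly_def algebra_simps)
  qed
  obtain B where B: "\<And>y. y \<in> T \<Longrightarrow> norm y \<le> B"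
    using bT by (auto simp: bounded_iff)
  have "(\<lambda>N. z ^ N * xs N) \<longlonglongrightarrow> 0"
  proof (rule Lim_null_comparison[of _ "\<lambda>N. norm z ^ N * B"])
    show "\<forall>\<^sub>F N in sequentially. norm (z ^ N * xs N) \<le> norm z ^ N * B"
      using B[OF xs_T] by (intro always_eventually allI) (simp add: norm_mult norm_power mult_left_mono)
    show "(\<lambda>N. norm z ^ N * B) \<longlonglongrightarrow> 0"
      using z by (auto intro!: tendsto_mult_left_zero LIMSEQ_power_zero)
  qed
  then have "(\<lambda>N. x - z ^ N * xs N) \<longlonglongrightarrow> x"
    using tendsto_diff[OF tendsto_const[of x]] by fastforce
  moreover have "(\<lambda>N. x - z ^ N * xs N) = pm_poly z c"
    using remainder by (auto simp: fun_eq_iff algebra_simps)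
  ultimately have "pm_poly z c \<longlonglongrightarrow> x"
    by simp
  then have "x = pm_series z c"
    using LIMSEQ_unique pm_poly_tendsto[OF z] by blast
  then show "x \<in> pm_set z"
    unfolding pm_set_def by (metis rangeI)
qed

lemma pm_set_subset_if_closed:
  assumes z: "norm z < 1" and cT: "closed T" and t: "t \<in> T"
    and inv: "\<And>b y. y \<in> T \<Longrightarrow> pm_map z b y \<in> T"
  shows "pm_set z \<subseteq> T"
proof
  fix x assume "x \<in> pm_set z"
  then obtain c where x: "x = pm_series z c"
    by (auto simp: pm_set_def)
  have approx_T: "pm_poly z c N + z ^ N * t \<in> T" for N
  proof (induction N arbitrary: c)
    case 0
    then show ?case using t by (simp add: pm_poly_def)
  next
    case (Suc N)
    have "pm_poly z c (Suc N) + z ^ Suc N * t = pm_map z (c 0) (pm_poly z (c \<circ> Suc) N + z ^ N * t)"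
      unfolding pm_poly_def
      by (simp only: sum.lessThan_Suc_shift) (simp add: pm_map_def sum_distrib_left algebra_simps)
    then show ?case
      using inv Suc[of "c \<circ> Suc"] by (simp add: comp_def)
  qed
  have "(\<lambda>N. z ^ N * t) \<longlonglongrightarrow> 0"
    using z by (auto intro!: tendsto_mult_left_zero LIMSEQ_power_zero)
  then have "(\<lambda>N. pm_poly z c N + z ^ N * t) \<longlonglongrightarrow> pm_series z c"
    using tendsto_add[OF pm_poly_tendsto[OF z]] by fastforce
  from closed_sequentially[OF cT _ this] approx_T show "x \<in> T"
    using x by blast
qed

lemma compact_pm_set:
  assumes z: "norm z < 1"
  shows "compact (pm_set z)"
proof -
  let ?C = "closure (pm_set z)"
  have cC: "compact ?C"
    using bounded_pm_set[OF z] by (simp add: compact_closure)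
  have "closed (hutchinson z ?C)"
    unfolding hutchinson_def
    by (intro closed_Un compact_imp_closed compact_continuous_image cC continuous_intros)
  moreover have "pm_set z \<subseteq> hutchinson z ?C"
    using pm_set_eq_hutchinson[OF z] closure_subset[of "pm_set z"]
    unfolding hutchinson_def by blast
  ultimately have "?C \<subseteq> hutchinson z ?C"
    by (rule closure_minimal[rotated])
  then have "?C \<subseteq> pm_set z"
    using subset_pm_set_if_bounded[OF z] cC compact_imp_bounded by blast
  then show ?thesis
    using cC closure_subset_eq bounded_pm_set[OF z] compact_eq_bounded_closed by metis
qed

section \<open>The attractor\<close>

definition attractor_coord :: "complex \<Rightarrow> complex \<Rightarrow> complex" where
  "attractor_coord z s = 1/2 + (1 - z)/2 * s"

definition attractor_coord_inv :: "complex \<Rightarrow> complex \<Rightarrow> complex" where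
  "attractor_coord_inv z x = (x - 1/2) * (2 / (1 - z))"

lemma attractor_coord_inverse:
  assumes "z \<noteq> 1"
  shows "attractor_coord z (attractor_coord_inv z x) = x"
    and "attractor_coord_inv z (attractor_coord z x) = x"
  using assms by (simp_all add: attractor_coord_def attractor_coord_inv_def field_simps)

lemma continuous_on_attractor_coord [continuous_intros]:
  "continuous_on X (attractor_coord z)" "continuous_on X (attractor_coord_inv z)"
  unfolding attractor_coord_def attractor_coord_inv_def by (intro continuous_intros)+

lemma bij_attractor_coord: "z \<noteq> 1 \<Longrightarrow> bij (attractor_coord z)"
  by (rule o_bij[of "attractor_coord_inv z"]) (auto simp: fun_eq_iff attractor_coord_inverse)

lemma ifs_image_attractor_coord:
  "ifs_f z ` attractor_coord z ` X = attractor_coord z ` pm_map z False ` X"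
  "ifs_g z ` attractor_coord z ` X = attractor_coord z ` pm_map z True ` X"
  by (auto simp: image_image ifs_f_def ifs_g_def attractor_coord_def pm_map_def pm_def field_simps)

lemma attractor_eq_image_pm_set:
  assumes zD: "z \<in> punctured_disc"
  shows "attractor z = attractor_coord z ` pm_set z"
proof -
  have z: "norm z < 1" and z1: "z \<noteq> 1"
    using zD by (auto simp: punctured_disc_def)
  have conj: "ifs_f z ` attractor_coord z ` X \<union> ifs_g z ` attractor_coord z ` X
      = attractor_coord z ` hutchinson z X" for X
    unfolding ifs_image_attractor_coord hutchinson_def by blast
  show ?thesis
    unfolding attractor_def
  proof (rule the_equality, intro conjI)
    show "attractor_coord z ` pm_set z \<noteq> {}"
      using pm_set_nonempty by simp
    show "compact (attractor_coord z ` pm_set z)"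
      by (intro compact_continuous_image compact_pm_set z continuous_intros)
    show "attractor_coord z ` pm_set z
        = ifs_f z ` attractor_coord z ` pm_set z \<union> ifs_g z ` attractor_coord z ` pm_set z"
      unfolding conj using pm_set_eq_hutchinson[OF z] by simp
  next
    fix T assume T: "T \<noteq> {} \<and> compact T \<and> T = ifs_f z ` T \<union> ifs_g z ` T"
    define T' where "T' = attractor_coord_inv z ` T"
    have TT': "T = attractor_coord z ` T'"
      unfolding T'_def image_image attractor_coord_inverse[OF z1] by simp
    have cT': "compact T'"
      unfolding T'_def using T by (intro compact_continuous_image continuous_intros) auto
    have "attractor_coord z ` T' = attractor_coord z ` hutchinson z T'"
      using T unfolding TT' conj by simp
    then have eqT': "T' = hutchinson z T'"
      using bij_attractor_coord[OF z1] by (simp add: bij_is_inj inj_image_eq_iff)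
    have "T' \<subseteq> pm_set z"
      using subset_pm_set_if_bounded[OF z compact_imp_bounded[OF cT'] equalityD1[OF eqT']] .
    moreover have "pm_set z \<subseteq> T'"
    proof -
      obtain t where "t \<in> T'"
        using T TT' by blast
      moreover have "pm_map z b y \<in> T'" if "y \<in> T'" for b y
        using that by (subst eqT') (cases b; auto simp: hutchinson_def)
      ultimately show ?thesis
        using pm_set_subset_if_closed[OF z compact_imp_closed[OF cT']] by blast
    qed
    ultimately show "T = attractor_coord z ` pm_set z"
      using TT' by simp
  qed
qed

lemma half_in_attractor_coord_image_iff:
  assumes "z \<noteq> 1"
  shows "1/2 \<in> attractor_coord z ` X \<longleftrightarrow> 0 \<in> X"
  using assms by (auto simp: attractor_coord_def image_iff)

lemma connected_attractor_coord_image_iff: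
  assumes "z \<noteq> 1"
  shows "connected (attractor_coord z ` X) \<longleftrightarrow> connected X"
proof
  assume "connected (attractor_coord z ` X)"
  then have "connected (attractor_coord_inv z ` attractor_coord z ` X)"
    by (rule connected_continuous_image[rotated]) (intro continuous_intros)
  then show "connected X"
    by (simp add: image_image attractor_coord_inverse[OF assms])
qed (intro connected_continuous_image continuous_intros)

lemma full_attractor_coord_image_iff:
  assumes "z \<noteq> 1"
  shows "full (attractor_coord z ` X) \<longleftrightarrow> full X"
  using bij_image_Compl_eq[OF bij_attractor_coord[OF assms], of X]
    connected_attractor_coord_image_iff[OF assms, of "- X"]
  by (simp add: full_def)

lemma punctured_discD:
  assumes "z \<in> punctured_disc"
  shows "norm z < 1" "z \<noteq> 1"
  using assms by (auto simp: punctured_disc_def)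

lemma Mset_iff: "z \<in> Mset \<longleftrightarrow> z \<in> punctured_disc \<and> connected (pm_set z)"
  unfolding Mset_def
  using attractor_eq_image_pm_set connected_attractor_coord_image_iff punctured_discD(2)
  by auto

lemma M0set_iff: "z \<in> M0set \<longleftrightarrow> z \<in> punctured_disc \<and> 0 \<in> pm_set z"
  unfolding M0set_def
  using attractor_eq_image_pm_set half_in_attractor_coord_image_iff punctured_discD(2)
  by auto

lemma M1set_iff: "z \<in> M1set \<longleftrightarrow> z \<in> punctured_disc \<and> connected (pm_set z) \<and> full (pm_set z)"
  unfolding M1set_def
  using attractor_eq_image_pm_set connected_attractor_coord_image_iff
    full_attractor_coord_image_iff punctured_discD(2)
  by auto

section \<open>Connectedness and fullness\<close>

lemma hutchinson_mono: "X \<subseteq> Y \<Longrightarrow> hutchinson z X \<subseteq> hutchinson z Y"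
  unfolding hutchinson_def by blast

definition pm_iterate :: "complex \<Rightarrow> nat \<Rightarrow> complex set" where
  "pm_iterate z n = (hutchinson z ^^ n) (cball 0 (1 / (1 - norm z)))"

lemma pm_iterate_simps:
  "pm_iterate z 0 = cball 0 (1 / (1 - norm z))"
  "pm_iterate z (Suc n) = hutchinson z (pm_iterate z n)"
  by (simp_all add: pm_iterate_def)

lemma pm_set_subset_pm_iterate:
  assumes z: "norm z < 1"
  shows "pm_set z \<subseteq> pm_iterate z n"
proof (induction n)
  case 0
  then show ?case using norm_pm_set_le[OF z] by (auto simp: pm_iterate_simps)
next
  case (Suc n)
  then show ?case
    using pm_set_eq_hutchinson[OF z] hutchinson_mono by (metis pm_iterate_simps(2))
qed

lemma pm_iterate_antimono:
  assumes z: "norm z < 1" and "n \<le> m"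
  shows "pm_iterate z m \<subseteq> pm_iterate z n"
proof -
  let ?R = "1 / (1 - norm z)"
  have "pm_map z b x \<in> cball 0 ?R" if "x \<in> cball 0 ?R" for b x
  proof -
    have "norm (pm_map z b x) \<le> norm (pm b) + norm (z * x)"
      unfolding pm_map_def by (rule norm_triangle_ineq)
    also have "\<dots> \<le> 1 + norm z * ?R"
      using that mult_left_mono[of "norm x" ?R "norm z"] by (simp add: norm_mult)
    also have "\<dots> = ?R"
      using z by (simp add: field_simps)
    finally show ?thesis by simp
  qed
  then have "pm_iterate z (Suc n) \<subseteq> pm_iterate z n" for n
    by (induction n) (auto simp: pm_iterate_simps hutchinson_def)
  then show ?thesis
    using lift_Suc_antimono_le[of "pm_iterate z"] \<open>n \<le> m\<close> by blast
qed

lemma pm_iterate_near_pm_set: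
  assumes z: "norm z < 1" and y: "y \<in> pm_iterate z n"
  shows "\<exists>s\<in>pm_set z. dist y s \<le> norm z ^ n * (2 / (1 - norm z))"
  using y
proof (induction n arbitrary: y)
  case 0
  let ?s = "pm_series z (\<lambda>_. True)"
  have "dist y ?s \<le> norm y + norm ?s"
    by (simp add: dist_norm norm_triangle_ineq4)
  also have "\<dots> \<le> 2 / (1 - norm z)"
    using "0" norm_pm_series_le[OF z, of "\<lambda>_. True"] by (simp add: pm_iterate_simps field_simps)
  finally show ?case
    by (intro bexI[of _ ?s]) (simp_all add: pm_set_def)
next
  case (Suc n)
  then obtain b y' where y': "y' \<in> pm_iterate z n" "y = pm_map z b y'"
    by (auto simp: pm_iterate_simps hutchinson_def)
  then obtain s' where s': "s' \<in> pm_set z" "dist y' s' \<le> norm z ^ n * (2 / (1 - norm z))"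
    using Suc.IH by blast
  have "pm_map z b s' \<in> pm_set z"
    using s'(1) pm_set_eq_hutchinson[OF z] by (cases b) (auto simp: hutchinson_def)
  moreover have "dist y (pm_map z b s') = norm z * dist y' s'"
    using y' by (simp add: pm_map_def dist_norm norm_mult flip: right_diff_distrib)
  ultimately show ?case
    using mult_left_mono[OF s'(2), of "norm z"] by (intro bexI[of _ "pm_map z b s'"]) (simp_all add: mult.assoc)
qed

lemma Inter_pm_iterate:
  assumes z: "norm z < 1"
  shows "\<Inter> (range (pm_iterate z)) = pm_set z"
proof
  show "pm_set z \<subseteq> \<Inter> (range (pm_iterate z))"
    using pm_set_subset_pm_iterate[OF z] by blast
  show "\<Inter> (range (pm_iterate z)) \<subseteq> pm_set z"
  proof
    fix x assume x: "x \<in> \<Inter> (range (pm_iterate z))"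
    let ?R = "2 / (1 - norm z)"
    have "\<exists>s\<in>pm_set z. dist s x < e" if e: "e > 0" for e
    proof -
      obtain n where "norm z ^ n < e / ?R"
        using real_arch_pow_inv[of "e / ?R" "norm z"] e z by auto
      then have "norm z ^ n * ?R < e"
        using z by (simp add: field_simps)
      moreover obtain s where "s \<in> pm_set z" "dist x s \<le> norm z ^ n * ?R"
        using pm_iterate_near_pm_set[OF z] x by blast
      ultimately show ?thesis
        by (metis dist_commute order_le_less_trans)
    qed
    then have "x \<in> closure (pm_set z)"
      by (simp add: closure_approachable)
    then show "x \<in> pm_set z"
      using compact_pm_set[OF z] by (simp add: closure_closed compact_imp_closed)
  qed
qed

text \<open>Hata's criterion.  The iterates of the disc are nested continua with intersection
  \<open>pm_set z\<close>.\<close>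

lemma connected_pm_set_if_pieces_meet:
  assumes z: "norm z < 1"
    and meet: "pm_map z True ` pm_set z \<inter> pm_map z False ` pm_set z \<noteq> {}"
  shows "connected (pm_set z)"
proof -
  have cc: "compact (pm_iterate z n) \<and> connected (pm_iterate z n)" for n
  proof (induction n)
    case 0
    then show ?case by (simp add: pm_iterate_simps)
  next
    case (Suc n)
    have "pm_map z True ` pm_iterate z n \<inter> pm_map z False ` pm_iterate z n \<noteq> {}"
      using meet pm_set_subset_pm_iterate[OF z, of n] by blast
    with Suc show ?case
      unfolding pm_iterate_simps hutchinson_def
      by (intro conjI compact_Un connected_Un compact_continuous_image connected_continuous_image
          continuous_intros) auto
  qed
  have "connected (\<Inter> (range (pm_iterate z)))"
  proof (rule connected_chain)
    show "S \<subseteq> T \<or> T \<subseteq> S" if "S \<in> range (pm_iterate z) \<and> T \<in> range (pm_iterate z)" for S T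
      using that pm_iterate_antimono[OF z] by (metis imageE nle_le)
  qed (use cc in auto)
  then show ?thesis
    using Inter_pm_iterate[OF z] by simp
qed

lemma pm_pieces_meet_if_zero:
  assumes z: "norm z < 1" and "0 \<in> pm_set z"
  shows "pm_map z True ` pm_set z \<inter> pm_map z False ` pm_set z \<noteq> {}"
proof -
  obtain c where c: "pm_series z c = 0"
    using assms(2) by (auto simp: pm_set_def)
  let ?c' = "\<lambda>n. \<not> c n"
  have "pm_series z ?c' = 0"
    using pm_series_uminus[OF z, of c] c by simp
  then have "0 \<in> pm_map z (c 0) ` pm_set z" "0 \<in> pm_map z (\<not> c 0) ` pm_set z"
    using pm_series_Suc[OF z, of c] pm_series_Suc[OF z, of ?c'] c
    by (auto simp: pm_set_def)
  then show ?thesis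
    by (cases "c 0") auto
qed

lemma constant_on_if_exp_constant:
  fixes h :: "'a::topological_space \<Rightarrow> complex"
  assumes K: "connected K" and h: "continuous_on K h" and exp_h: "\<And>x. x \<in> K \<Longrightarrow> exp (h x) = w"
  shows "h constant_on K"
proof (rule continuous_discrete_range_constant[OF K h])
  fix x assume x: "x \<in> K"
  show "\<exists>e>0. \<forall>y. y \<in> K \<and> h y \<noteq> h x \<longrightarrow> e \<le> norm (h y - h x)"
  proof (intro exI[of _ "2 * pi"] conjI allI impI)
    fix y assume y: "y \<in> K \<and> h y \<noteq> h x"
    have "w \<noteq> 0"
      using exp_h[OF x] exp_not_eq_zero by metis
    then have "exp (h y - h x) = 1"
      using exp_h[OF x] exp_h[of y] y by (simp add: exp_diff)
    then obtain n :: int where re: "Re (h y - h x) = 0" and im: "Im (h y - h x) = of_int (2 * n) * pi"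
      using exp_eq_1 by blast
    have "n \<noteq> 0"
      using re im y by (auto simp: complex_eq_iff)
    then have "2 * pi \<le> 2 * pi * \<bar>real_of_int n\<bar>"
      by simp
    also have "\<dots> = \<bar>Im (h y - h x)\<bar>"
      using im by (simp add: abs_mult)
    also have "\<dots> \<le> norm (h y - h x)"
      by (rule abs_Im_le_cmod)
    finally show "2 * pi \<le> norm (h y - h x)" .
  qed simp
qed

text \<open>The direction \<open>x - p\<close> has no continuous logarithm on a continuum \<open>K\<close> symmetric about
  \<open>p\<close>: the logarithms at \<open>x\<close> and \<open>2 p - x\<close> would differ by an odd multiple of \<open>\<pi> i\<close>,
  continuously and hence constantly, which is impossible as the difference is odd under the
  reflection.\<close>

lemma bounded_component_of_point_symmetric:
  fixes K :: "complex set"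
  assumes cK: "compact K" and conK: "connected K" and neK: "K \<noteq> {}" and pK: "p \<notin> K"
    and symK: "\<And>x. x \<in> K \<Longrightarrow> 2 * p - x \<in> K"
  shows "bounded (connected_component_set (- K) p)"
proof (rule ccontr)
  assume "\<not> bounded (connected_component_set (- K) p)"
  then obtain c where "homotopic_with_canon (\<lambda>x. True) K (sphere 0 1)
                         (\<lambda>x. inverse (norm (x - p)) *\<^sub>R (x - p)) (\<lambda>x. c)"
    using Borsuk_map_essential_bounded_component[OF cK pK] by blast
  then have "homotopic_with_canon (\<lambda>x. True) K (- {0})
               (\<lambda>x. inverse (norm (x - p)) *\<^sub>R (x - p)) (\<lambda>x. c)"
    by (rule homotopic_with_subset_right) auto
  then have "\<exists>g. continuous_on K g \<and> (\<forall>x\<in>K. inverse (norm (x - p)) *\<^sub>R (x - p) = exp (g x))"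
    by (intro inessential_eq_continuous_logarithm[THEN iffD1] exI)
  then obtain g where contg: "continuous_on K g"
    and g: "\<And>x. x \<in> K \<Longrightarrow> inverse (norm (x - p)) *\<^sub>R (x - p) = exp (g x)"
    by blast
  define h where "h x = g (2 * p - x) - g x" for x
  have "(\<lambda>x. 2 * p - x) ` K \<subseteq> K"
    using symK by blast
  then have "continuous_on K h"
    unfolding h_def
    by (intro continuous_on_diff contg continuous_on_compose2[OF contg]) (auto intro!: continuous_intros)
  moreover have exp_h: "exp (h x) = -1" if x: "x \<in> K" for x
  proof -
    have "(2 * p - x) - p = - (x - p)"
      by simp
    then have "inverse (norm ((2 * p - x) - p)) *\<^sub>R ((2 * p - x) - p)
        = - (inverse (norm (x - p)) *\<^sub>R (x - p))"
      by (simp only: norm_minus_cancel scaleR_minus_right)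
    then have "exp (g (2 * p - x)) = - exp (g x)"
      using g[OF symK[OF x]] g[OF x] by simp
    then show ?thesis
      by (simp add: h_def exp_diff)
  qed
  ultimately have "h constant_on K"
    using constant_on_if_exp_constant[OF conK] by blast
  moreover obtain x where x: "x \<in> K"
    using neK by blast
  ultimately have "h x = h (2 * p - x)"
    using symK by (metis constant_on_def)
  then have "h x = 0"
    by (simp add: h_def)
  then show False
    using exp_h[OF x] by simp
qed

lemma not_full_if_point_symmetric_subcontinuum:
  fixes X K :: "complex set"
  assumes bX: "bounded X" and KX: "K \<subseteq> X" and cK: "compact K" and conK: "connected K"
    and neK: "K \<noteq> {}" and pX: "p \<notin> X" and symK: "\<And>x. x \<in> K \<Longrightarrow> 2 * p - x \<in> K"
  shows "\<not> full X"
proof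
  assume "full X"
  then have "connected_component_set (- X) p = - X"
    using pX by (simp add: full_def connected_component_eq_self)
  moreover have "connected_component_set (- X) p \<subseteq> connected_component_set (- K) p"
    using KX by (intro connected_component_mono) blast
  ultimately have "bounded (- X)"
    using bounded_component_of_point_symmetric[OF cK conK neK _ symK] pX KX bounded_subset by blast
  then show False
    using bounded_Un[of X "- X"] bX not_bounded_UNIV by simp
qed

lemma zero_in_pm_set_if_full:
  assumes z: "norm z < 1" and "connected (pm_set z)" and "full (pm_set z)"
  shows "0 \<in> pm_set z"
proof (rule ccontr)
  assume "0 \<notin> pm_set z"
  with assms(2) have "\<not> full (pm_set z)"
    using uminus_in_pm_set[OF z]
    by (intro not_full_if_point_symmetric_subcontinuum[OF bounded_pm_set[OF z] order_refl
        compact_pm_set[OF z] _ pm_set_nonempty]) auto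
  with assms(3) show False
    by simp
qed

lemma not_full_pm_set_if_symmetric_cylinders:
  assumes z: "norm z < 1" and conn: "connected (pm_set z)"
    and centre: "pm_poly z w n + pm_poly z v n = 2 * p"
    and meet: "(\<lambda>s. pm_poly z w n + z ^ n * s) ` pm_set z \<inter> (\<lambda>s. pm_poly z v n + z ^ n * s) ` pm_set z \<noteq> {}"
    and p: "p \<notin> pm_set z"
  shows "\<not> full (pm_set z)"
proof -
  define K where "K = (\<lambda>s. pm_poly z w n + z ^ n * s) ` pm_set z \<union> (\<lambda>s. pm_poly z v n + z ^ n * s) ` pm_set z"
  have cont: "continuous_on (pm_set z) (\<lambda>s. a + z ^ n * s)" for a
    by (intro continuous_intros)
  have "compact K" "connected K"
    unfolding K_def using meet
    by (intro compact_Un connected_Un compact_continuous_image[OF cont] connected_continuous_image[OF cont]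
        compact_pm_set z conn; simp)+
  moreover have "K \<subseteq> pm_set z"
    unfolding K_def using pm_poly_plus_in_pm_set[OF z] by blast
  moreover have "2 * p - x \<in> K" if "x \<in> K" for x
  proof -
    have "2 * p - (pm_poly z w n + z ^ n * s) = pm_poly z v n + z ^ n * (- s)"
      "2 * p - (pm_poly z v n + z ^ n * s) = pm_poly z w n + z ^ n * (- s)" for s
      unfolding centre[symmetric] by (simp_all add: algebra_simps)
    then show ?thesis
      using that uminus_in_pm_set[OF z] unfolding K_def by blast
  qed
  ultimately show ?thesis
    using not_full_if_point_symmetric_subcontinuum[OF bounded_pm_set[OF z] _ _ _ _ p] meet
    unfolding K_def by blast
qed

section \<open>Certified exclusion of discs\<close>

definition grid_point :: "int \<Rightarrow> int \<Rightarrow> int \<Rightarrow> complex" where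
  "grid_point M a b = Complex (of_int a / of_int M) (of_int b / of_int M)"

definition div_ceil :: "int \<Rightarrow> int \<Rightarrow> int" where
  "div_ceil x y = - ((- x) div y)"

lemma div_ceil_ge:
  assumes "y > 0"
  shows "of_int x / of_int y \<le> (of_int (div_ceil x y) :: real)"
proof -
  have "of_int ((- x) div y) \<le> (of_int (- x) / of_int y :: real)"
    using floor_divide_of_int_eq[of "- x" y, where 'a = real] of_int_floor_le by metis
  then show ?thesis
    by (simp add: div_ceil_def)
qed

lemma div_rounding_error: "y > 0 \<Longrightarrow> \<bar>of_int x / of_int y - of_int (x div y)\<bar> < (1 :: real)"
  using floor_divide_of_int_eq[of x y, where 'a = real]
    of_int_floor_le[of "of_int x / of_int y :: real"] real_of_int_floor_add_one_gt[of "of_int x / of_int y"]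
  by linarith

text \<open>\<open>disc_excluded \<dots> n a b r\<close> certifies that the closed disc of radius \<open>r/M\<close> around
  \<open>grid_point M a b\<close> misses \<open>pm_set z\<close>, for every \<open>z\<close> within \<open>en/ed\<close> of
  \<open>z\<^sub>0 = grid_point D p q\<close> with \<open>\<bar>z\<bar>, \<bar>z\<^sub>0\<bar> \<ge> mn/md\<close>, given that \<open>pm_set z\<close> lies in the disc
  of radius \<open>RS/M\<close> around 0.  Either the disc is outside that bound, or both of its
  preimages \<open>(x - d)/z\<close>, \<open>d = \<plusminus>1\<close>, lie in discs that are excluded with fuel \<open>n - 1\<close>; the
  preimage disc is computed in integer arithmetic with \<open>z\<^sub>0\<close> for \<open>z\<close>, its radius enlarged to
  absorb the rounding and the error \<open>z - z\<^sub>0\<close>.\<close>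

fun disc_excluded ::
  "int \<Rightarrow> int \<Rightarrow> int \<Rightarrow> int \<Rightarrow> int \<Rightarrow> int \<Rightarrow> int \<Rightarrow> int \<Rightarrow> int \<Rightarrow> nat \<Rightarrow> int \<Rightarrow> int \<Rightarrow> int \<Rightarrow> bool"
where
  "disc_excluded M p q D mn md en ed RS n a b r =
    (if (RS + r)^2 < a^2 + b^2 then True
     else case n of 0 \<Rightarrow> False
       | Suc k \<Rightarrow> (\<forall>d\<in>{1,-1}.
           let A = a - d*M; N2 = p^2 + q^2 in
           disc_excluded M p q D mn md en ed RS k (((A*p + b*q)*D) div N2) (((b*p - A*q)*D) div N2)
             (div_ceil (r*md) mn + div_ceil ((\<bar>A\<bar> + \<bar>b\<bar>)*en*md*md) (ed*mn*mn) + 2)))"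

declare disc_excluded.simps [simp del]

lemma norm_diff_quotients_le:
  fixes z z0 x c d :: complex and m e R1 R2 :: real
  assumes m: "0 < m" "m \<le> norm z" "m \<le> norm z0" and ze: "norm (z - z0) \<le> e"
    and xc: "norm (x - c) \<le> R1" and cd: "norm (c - d) \<le> R2" and e: "0 \<le> e"
  shows "norm ((x - d) / z - (c - d) / z0) \<le> R1 / m + R2 * e / m^2"
proof -
  have nz: "z \<noteq> 0" "z0 \<noteq> 0"
    using m by auto
  have "0 \<le> R1" "0 \<le> R2"
    using xc cd norm_ge_zero[of "x - c"] norm_ge_zero[of "c - d"] by linarith+
  from nz have "(x - d) / z - (c - d) / z0 = (x - c) / z + (c - d) * (z0 - z) / (z * z0)"
    by (simp add: field_simps)
  also have "norm \<dots> \<le> norm (x - c) / norm z + norm (c - d) * norm (z - z0) / (norm z * norm z0)"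
    by (rule order_trans[OF norm_triangle_ineq])
       (simp add: norm_divide norm_mult norm_minus_commute)
  also have "\<dots> \<le> R1 / m + R2 * e / (m * m)"
  proof (rule add_mono)
    show "norm (x - c) / norm z \<le> R1 / m"
      using m xc \<open>0 \<le> R1\<close> by (intro frac_le) auto
    show "norm (c - d) * norm (z - z0) / (norm z * norm z0) \<le> R2 * e / (m * m)"
      using m xc cd ze e \<open>0 \<le> R2\<close> by (intro frac_le mult_mono) auto
  qed
  finally show ?thesis
    by (simp add: power2_eq_square)
qed

lemma norm_grid_point_le: "M > 0 \<Longrightarrow> norm (grid_point M a b) \<le> (\<bar>of_int a\<bar> + \<bar>of_int b\<bar>) / of_int M"
  using cmod_le[of "grid_point M a b"] by (simp add: grid_point_def abs_divide add_divide_distrib)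

lemma grid_point_diff_of_int: "M > 0 \<Longrightarrow> grid_point M a b - of_int d = grid_point M (a - d * M) b"
  by (simp add: grid_point_def complex_eq_iff field_simps)

lemma grid_point_divide_rounding:
  fixes M D p q A b :: int
  assumes "M > 0" "D > 0" "p^2 + q^2 > 0"
  shows "norm (grid_point M A b / grid_point D p q
     - grid_point M (((A*p + b*q)*D) div (p^2 + q^2)) (((b*p - A*q)*D) div (p^2 + q^2))) \<le> 2 / of_int M"
proof -
  define N2 where "N2 = p^2 + q^2"
  have N2: "N2 > 0"
    using assms by (simp add: N2_def)
  let ?e = "grid_point M A b / grid_point D p q"
  let ?c = "grid_point M (((A*p + b*q)*D) div N2) (((b*p - A*q)*D) div N2)"
  have den: "(Re (grid_point D p q))^2 + (Im (grid_point D p q))^2 = of_int N2 / (of_int D)^2"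
    by (simp add: grid_point_def N2_def power_divide add_divide_distrib)
  define u v :: real where "u = of_int ((A*p + b*q)*D) / of_int N2"
    and "v = of_int ((b*p - A*q)*D) / of_int N2"
  have "Re ?e = u / of_int M" "Im ?e = v / of_int M"
    unfolding Re_divide Im_divide den u_def v_def using assms N2
    by (simp_all add: grid_point_def field_simps power2_eq_square)
  then have "Re (?e - ?c) = (u - of_int (((A*p + b*q)*D) div N2)) / of_int M"
    "Im (?e - ?c) = (v - of_int (((b*p - A*q)*D) div N2)) / of_int M"
    by (simp_all add: grid_point_def diff_divide_distrib)
  moreover have "\<bar>u - of_int (((A*p + b*q)*D) div N2)\<bar> < 1" "\<bar>v - of_int (((b*p - A*q)*D) div N2)\<bar> < 1"
    unfolding u_def v_def using div_rounding_error[OF N2] by blast+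
  ultimately have "\<bar>Re (?e - ?c)\<bar> < 1 / of_int M" "\<bar>Im (?e - ?c)\<bar> < 1 / of_int M"
    using assms(1) by (simp_all add: abs_divide divide_strict_right_mono)
  then show ?thesis
    using cmod_le[of "?e - ?c"] unfolding N2_def by simp
qed

lemma disc_excluded_step:
  fixes M p q D mn md en ed a b r d :: int and x z :: complex
  defines "A \<equiv> a - d * M"
  assumes pos: "M > 0" "D > 0" "p^2 + q^2 > 0" "mn > 0" "md > 0" "en \<ge> 0" "ed > 0"
    and ze: "norm (z - grid_point D p q) \<le> of_int en / of_int ed"
    and mz: "of_int mn / of_int md \<le> norm z" "of_int mn / of_int md \<le> norm (grid_point D p q)"
    and x: "norm (x - grid_point M a b) \<le> of_int r / of_int M"
  shows "norm ((x - of_int d) / z - grid_point M (((A*p + b*q)*D) div (p^2 + q^2))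
                                               (((b*p - A*q)*D) div (p^2 + q^2)))
     \<le> of_int (div_ceil (r*md) mn + div_ceil ((\<bar>A\<bar> + \<bar>b\<bar>)*en*md*md) (ed*mn*mn) + 2) / of_int M"
proof -
  let ?c = "grid_point M a b" and ?z0 = "grid_point D p q"
  let ?c' = "grid_point M (((A*p + b*q)*D) div (p^2 + q^2)) (((b*p - A*q)*D) div (p^2 + q^2))"
  define m where "m = of_int mn / (of_int md :: real)"
  define e where "e = of_int en / (of_int ed :: real)"
  have cd: "?c - of_int d = grid_point M A b"
    unfolding A_def using grid_point_diff_of_int[OF pos(1)] .
  have "0 < m" "0 \<le> e"
    using pos by (simp_all add: m_def e_def)
  then have "norm ((x - of_int d) / z - (?c - of_int d) / ?z0)
      \<le> (of_int r / of_int M) / m + ((\<bar>of_int A\<bar> + \<bar>of_int b\<bar>) / of_int M) * e / m^2"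
    by (rule norm_diff_quotients_le[OF _ mz[folded m_def] ze[folded e_def] x
          norm_grid_point_le[OF pos(1), of A b, folded cd]])
  moreover have "norm ((?c - of_int d) / ?z0 - ?c') \<le> 2 / of_int M"
    unfolding cd using grid_point_divide_rounding[OF pos(1-3)] .
  moreover have "(of_int r / of_int M) / m + ((\<bar>of_int A\<bar> + \<bar>of_int b\<bar>) / of_int M) * e / m^2
      = (of_int (r*md) / of_int mn + of_int ((\<bar>A\<bar> + \<bar>b\<bar>)*en*md*md) / of_int (ed*mn*mn)) / of_int M"
    using pos by (simp add: m_def e_def field_simps power2_eq_square)
  moreover have "\<dots> + 2 / of_int M
      \<le> of_int (div_ceil (r*md) mn + div_ceil ((\<bar>A\<bar> + \<bar>b\<bar>)*en*md*md) (ed*mn*mn) + 2) / of_int M"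
    using div_ceil_ge[of mn "r*md"] div_ceil_ge[of "ed*mn*mn" "(\<bar>A\<bar> + \<bar>b\<bar>)*en*md*md"] pos
    by (simp add: divide_right_mono add_divide_distrib[symmetric])
  ultimately show ?thesis
    using norm_triangle_ineq[of "(x - of_int d) / z - (?c - of_int d) / ?z0" "(?c - of_int d) / ?z0 - ?c'"]
    by simp
qed

lemma disc_far_from_pm_set:
  fixes a b RS r M :: int and x :: complex
  assumes M: "M > 0" and x: "norm x \<le> of_int RS / of_int M"
    and xc: "norm (x - grid_point M a b) \<le> of_int r / of_int M"
  shows "a^2 + b^2 \<le> (RS + r)^2"
proof -
  have "norm (grid_point M a b) \<le> of_int (RS + r) / of_int M"
    using norm_triangle_ineq3[of x "grid_point M a b"] x xc
    by (simp add: norm_minus_commute add_divide_distrib)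
  then have "(of_int a / of_int M)^2 + (of_int b / of_int M)^2 \<le> (of_int (RS + r) / of_int M :: real)^2"
    by (intro sqrt_le_D) (simp add: grid_point_def complex_norm)
  then have "real_of_int (a^2 + b^2) \<le> of_int ((RS + r)^2)"
    using M by (simp add: power_divide divide_le_cancel flip: add_divide_distrib)
  then show ?thesis
    by linarith
qed

lemma pm_set_step:
  assumes "norm z < 1" "z \<noteq> 0" and "x \<in> pm_set z"
  shows "\<exists>d\<in>{1, -1 :: int}. (x - of_int d) / z \<in> pm_set z"
proof -
  obtain c where "x = pm_series z c"
    using assms by (auto simp: pm_set_def)
  then have "(x - pm (c 0)) / z \<in> pm_set z"
    using pm_series_Suc[OF assms(1), of c] assms(2) by (simp add: pm_map_def pm_set_def)
  then show ?thesis
    by (cases "c 0") (auto simp: pm_def)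
qed

lemma disc_excluded_sound:
  fixes M p q D mn md en ed RS :: int and z :: complex
  assumes pos: "M > 0" "D > 0" "p^2 + q^2 > 0" "mn > 0" "md > 0" "en \<ge> 0" "ed > 0"
    and z: "norm z < 1" "z \<noteq> 0"
    and ze: "norm (z - grid_point D p q) \<le> of_int en / of_int ed"
    and mz: "of_int mn / of_int md \<le> norm z" "of_int mn / of_int md \<le> norm (grid_point D p q)"
    and RS: "\<And>x. x \<in> pm_set z \<Longrightarrow> norm x \<le> of_int RS / of_int M"
  shows "disc_excluded M p q D mn md en ed RS n a b r \<Longrightarrow>
         norm (x - grid_point M a b) \<le> of_int r / of_int M \<Longrightarrow> x \<notin> pm_set z"
proof (induction n arbitrary: a b r x)
  case 0
  show ?case
  proof
    assume "x \<in> pm_set z"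
    with disc_far_from_pm_set[OF pos(1) RS[OF this] "0.prems"(2)] "0.prems"(1) show False
      unfolding disc_excluded.simps[of M p q D mn md en ed RS 0 a b r] by simp
  qed
next
  case (Suc k)
  show ?case
  proof
    assume x: "x \<in> pm_set z"
    obtain d where d: "d \<in> {1, -1}" and x': "(x - of_int d) / z \<in> pm_set z"
      using pm_set_step[OF z x] by blast
    have not_far: "\<not> (RS + r)^2 < a^2 + b^2"
      using disc_far_from_pm_set[OF pos(1) RS[OF x] Suc.prems(2)] by simp
    from Suc.prems(1) have "\<forall>d\<in>{1, -1}. let A = a - d*M; N2 = p^2 + q^2 in
        disc_excluded M p q D mn md en ed RS k (((A*p + b*q)*D) div N2) (((b*p - A*q)*D) div N2)
          (div_ceil (r*md) mn + div_ceil ((\<bar>A\<bar> + \<bar>b\<bar>)*en*md*md) (ed*mn*mn) + 2)"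
      unfolding disc_excluded.simps[of M p q D mn md en ed RS "Suc k" a b r]
      by (simp only: if_not_P[OF not_far] nat.case)
    then have "disc_excluded M p q D mn md en ed RS k (((a - d*M)*p + b*q)*D div (p^2 + q^2))
            ((b*p - (a - d*M)*q)*D div (p^2 + q^2))
            (div_ceil (r*md) mn + div_ceil ((\<bar>a - d*M\<bar> + \<bar>b\<bar>)*en*md*md) (ed*mn*mn) + 2)"
      using d unfolding Let_def by blast
    from Suc.IH[OF this disc_excluded_step[OF pos ze mz Suc.prems(2)]] x' show False
      by simp
  qed
qed

section \<open>Two parameters\<close>

lemma exists_root_near:
  fixes P :: "complex \<Rightarrow> complex" and z0 L :: complex and e :: real
  assumes e: "e > 0" and L: "L \<noteq> 0" and cP: "continuous_on UNIV P"
    and lin: "\<And>h. norm h \<le> e \<Longrightarrow> norm (P (z0 + h) - L * h) \<le> norm L * e"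
  shows "\<exists>z. norm (z - z0) \<le> e \<and> P z = 0"
proof -
  define F where "F w = w - P w / L" for w
  have "continuous_on (cball z0 e) F"
    unfolding F_def by (intro continuous_intros continuous_on_subset[OF cP]) (auto simp: L)
  moreover have "F \<in> cball z0 e \<rightarrow> cball z0 e"
  proof
    fix w assume "w \<in> cball z0 e"
    then have h: "norm (w - z0) \<le> e"
      by (simp add: dist_norm norm_minus_commute)
    have "F w - z0 = - ((P (z0 + (w - z0)) - L * (w - z0)) / L)"
      using L by (simp add: F_def field_simps)
    then have "norm (F w - z0) = norm (P (z0 + (w - z0)) - L * (w - z0)) / norm L"
      by (simp add: norm_divide)
    also have "\<dots> \<le> e"
      using lin[OF h] L by (simp add: pos_divide_le_eq mult.commute)
    finally show "F w \<in> cball z0 e"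
      by (simp add: dist_norm norm_minus_commute)
  qed
  ultimately obtain x where "x \<in> cball z0 e" "F x = x"
    using brouwer_ball[OF e] by blast
  then show ?thesis
    using L by (intro exI[of _ x]) (simp add: F_def dist_norm norm_minus_commute)
qed

lemma exists_root_near_poly6:
  fixes P :: "complex \<Rightarrow> complex" and z0 L a b c d f g :: complex and r :: real
  assumes r: "r > 0" and L: "L \<noteq> 0" and cP: "continuous_on UNIV P"
    and expand: "\<And>h. P (z0 + h) - L * h = a + b*h^2 + c*h^3 + d*h^4 + f*h^5 + g*h^6"
    and bound: "norm a + norm b * r^2 + norm c * r^3 + norm d * r^4 + norm f * r^5 + norm g * r^6
                  \<le> norm L * r"
  shows "\<exists>z. norm (z - z0) \<le> r \<and> P z = 0"
proof (rule exists_root_near[OF r L cP])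
  fix h :: complex assume h: "norm h \<le> r"
  have power_term: "norm (k * h^n) \<le> norm k * r^n" for k :: complex and n
    by (simp add: norm_mult norm_power mult_left_mono power_mono h)
  have "norm (P (z0 + h) - L * h)
      \<le> norm a + norm (b*h^2) + norm (c*h^3) + norm (d*h^4) + norm (f*h^5) + norm (g*h^6)"
    unfolding expand by (intro norm_triangle_le add_mono order_refl)+
  also have "\<dots> \<le> norm L * r"
    using bound power_term[of b 2] power_term[of c 3] power_term[of d 4] power_term[of f 5]
      power_term[of g 6]
    by linarith
  finally show "norm (P (z0 + h) - L * h) \<le> norm L * r" .
qed

lemma norm_Complex_le_abs: "norm (Complex x y) \<le> \<bar>x\<bar> + \<bar>y\<bar>"
  using cmod_le[of "Complex x y"] by simp

lemma norm_Complex_between: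
  assumes "0 \<le> lo" "lo^2 \<le> x^2 + y^2" "x^2 + y^2 \<le> hi^2" "0 \<le> hi"
  shows "lo \<le> norm (Complex x y)" "norm (Complex x y) \<le> hi"
  using assms power2_le_imp_le[of lo "norm (Complex x y)"] power2_le_imp_le[of "norm (Complex x y)" hi]
  by (simp_all add: cmod_power2)

lemma root_near_549_386:
  "\<exists>z. norm (z - Complex (549/1000) (386/1000)) \<le> 2/1000 \<and> 1 - z + z^3 + z^4 + z^5 + z^6 = 0"
proof (rule exists_root_near_poly6[where P = "\<lambda>z. 1 - z + z^3 + z^4 + z^5 + z^6"
    and L = "Complex (-1229448369684613/500000000000000) (786692899737319/250000000000000)"
    and a = "Complex (69763717050113/200000000000000000) (-337526984242613/250000000000000000)"
    and b = "Complex (-116777194677/200000000000) (42769361051/5000000000)"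
    and c = "Complex (156075237/50000000) (290311951/25000000)"
    and d = "Complex (241243/40000) (414371/50000)"
    and f = "Complex (2147/500) (579/250)" and g = 1])
  show "(\<lambda>z. 1 - z + z^3 + z^4 + z^5 + z^6) (Complex (549/1000) (386/1000) + h)
      - Complex (-1229448369684613/500000000000000) (786692899737319/250000000000000) * h
    = Complex (69763717050113/200000000000000000) (-337526984242613/250000000000000000)
      + Complex (-116777194677/200000000000) (42769361051/5000000000) * h^2
      + Complex (156075237/50000000) (290311951/25000000) * h^3
      + Complex (241243/40000) (414371/50000) * h^4
      + Complex (2147/500) (579/250) * h^5 + 1 * h^6" for h
  proof -
    have i: "\<i> * \<i> = -1"
      by simp
    show ?thesis
      unfolding Complex_eq by simp (use i in algebra)
  qed
  have "norm (Complex (69763717050113/200000000000000000) (-337526984242613/250000000000000000))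
      + norm (Complex (-116777194677/200000000000) (42769361051/5000000000)) * (2/1000)^2
      + norm (Complex (156075237/50000000) (290311951/25000000)) * (2/1000)^3
      + norm (Complex (241243/40000) (414371/50000)) * (2/1000)^4
      + norm (Complex (2147/500) (579/250)) * (2/1000)^5 + norm (1::complex) * (2/1000)^6
    \<le> (\<bar>69763717050113/200000000000000000\<bar> + \<bar>-337526984242613/250000000000000000\<bar>)
      + (\<bar>-116777194677/200000000000\<bar> + \<bar>42769361051/5000000000\<bar>) * (2/1000)^2
      + (\<bar>156075237/50000000\<bar> + \<bar>290311951/25000000\<bar>) * (2/1000)^3
      + (\<bar>241243/40000\<bar> + \<bar>414371/50000\<bar>) * (2/1000)^4
      + (\<bar>2147/500\<bar> + \<bar>579/250\<bar>) * (2/1000)^5 + 1 * (2/1000)^6"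
    by (intro add_mono mult_right_mono norm_Complex_le_abs) simp_all
  also have "\<dots> \<le> \<bar>Im (Complex (-1229448369684613/500000000000000) (786692899737319/250000000000000))\<bar> * (2/1000)"
    by (simp add: power_divide)
  also have "\<dots> \<le> norm (Complex (-1229448369684613/500000000000000) (786692899737319/250000000000000)) * (2/1000)"
    by (intro mult_right_mono abs_Im_le_cmod) simp
  finally show "norm (Complex (69763717050113/200000000000000000) (-337526984242613/250000000000000000))
      + norm (Complex (-116777194677/200000000000) (42769361051/5000000000)) * (2/1000)^2
      + norm (Complex (156075237/50000000) (290311951/25000000)) * (2/1000)^3
      + norm (Complex (241243/40000) (414371/50000)) * (2/1000)^4
      + norm (Complex (2147/500) (579/250)) * (2/1000)^5 + norm (1::complex) * (2/1000)^6
    \<le> norm (Complex (-1229448369684613/500000000000000) (786692899737319/250000000000000)) * (2/1000)" .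
qed (auto simp: complex_eq_iff intro!: continuous_intros)

lemma disc_excluded_zero_549_386: "disc_excluded 1048576 549 386 1000 669 1000 2 1000 3250586 60 0 0 0"
  by code_simp

lemma Mset_minus_M0set_nonempty: "\<exists>z. z \<in> Mset \<and> z \<notin> M0set"
proof -
  let ?z0 = "Complex (549/1000) (386/1000)"
  obtain z where ze: "norm (z - ?z0) \<le> 2/1000" and root: "1 - z + z^3 + z^4 + z^5 + z^6 = 0"
    using root_near_549_386 by blast
  have z0: "671/1000 \<le> norm ?z0" "norm ?z0 \<le> 6712/10000"
    using norm_Complex_between[of "671/1000" "549/1000" "386/1000" "6712/10000"]
    by (simp_all add: power2_eq_square)
  have lo: "669/1000 \<le> norm z" and hi: "norm z \<le> 6732/10000"
    using z0 ze norm_triangle_ineq2[of ?z0 z] norm_triangle_ineq[of ?z0 "z - ?z0"]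
    by (simp_all add: norm_minus_commute)
  then have z: "norm z < 1" "z \<noteq> 0"
    by auto
  have "0 \<notin> pm_set z"
  proof (rule disc_excluded_sound[OF _ _ _ _ _ _ _ z _ _ _ _ disc_excluded_zero_549_386])
    show "norm x \<le> of_int 3250586 / of_int 1048576" if "x \<in> pm_set z" for x
      using norm_pm_set_le_of_norm_le[OF hi _ that] by simp
  qed (use ze lo z0 in \<open>simp_all add: grid_point_def complex_eq_iff\<close>)
  moreover have "pm_map z True ` pm_set z \<inter> pm_map z False ` pm_set z \<noteq> {}"
  proof -
    let ?c = "\<lambda>n::nat. n \<noteq> 0" and ?c' = "\<lambda>n::nat. n \<notin> {2, 3, 4, 5}"
    have "pm_series z ?c = pm_poly z ?c 6 + z^6 * pm_series z (\<lambda>_. True)"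
      "pm_series z ?c' = pm_poly z ?c' 6 + z^6 * pm_series z (\<lambda>_. True)"
      by (rule pm_series_eventually_True[OF z(1)]; simp)+
    then have "pm_map z True (pm_series z ?c) = pm_map z False (pm_series z ?c')"
      using root by (simp add: pm_map_def pm_poly_def lessThan_nat_numeral pm_def) algebra
    then show ?thesis
      unfolding pm_set_def by blast
  qed
  ultimately show ?thesis
    using z connected_pm_set_if_pieces_meet by (auto simp: Mset_iff M0set_iff punctured_disc_def)
qed

lemma root_near_425_566:
  "\<exists>z. norm (z - Complex (425/1000) (566/1000)) \<le> 2/10000 \<and> 1 - z + z^2 + z^3 + z^4 - z^5 + z^6 = 0"
proof (rule exists_root_near_poly6[where P = "\<lambda>z. 1 - z + z^2 + z^3 + z^4 - z^5 + z^6"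
    and L = "Complex (-3680488814309/4000000000000) (671624212986989/250000000000000)"
    and a = "Complex (-81638284249891/1000000000000000000) (-487353396947/10000000000000000)"
    and b = "Complex (314901977083/200000000000) (1314064937/1000000000)"
    and c = "Complex (-5072911/2000000) (-985123/25000000)"
    and d = "Complex (-644193/200000) (8773/2000)"
    and f = "Complex (31/20) (849/250)" and g = 1])
  show "(\<lambda>z. 1 - z + z^2 + z^3 + z^4 - z^5 + z^6) (Complex (425/1000) (566/1000) + h)
      - Complex (-3680488814309/4000000000000) (671624212986989/250000000000000) * h
    = Complex (-81638284249891/1000000000000000000) (-487353396947/10000000000000000)
      + Complex (314901977083/200000000000) (1314064937/1000000000) * h^2
      + Complex (-5072911/2000000) (-985123/25000000) * h^3
      + Complex (-644193/200000) (8773/2000) * h^4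
      + Complex (31/20) (849/250) * h^5 + 1 * h^6" for h
  proof -
    have i: "\<i> * \<i> = -1"
      by simp
    show ?thesis
      unfolding Complex_eq by simp (use i in algebra)
  qed
  have "norm (Complex (-81638284249891/1000000000000000000) (-487353396947/10000000000000000))
      + norm (Complex (314901977083/200000000000) (1314064937/1000000000)) * (2/10000)^2
      + norm (Complex (-5072911/2000000) (-985123/25000000)) * (2/10000)^3
      + norm (Complex (-644193/200000) (8773/2000)) * (2/10000)^4
      + norm (Complex (31/20) (849/250)) * (2/10000)^5 + norm (1::complex) * (2/10000)^6
    \<le> (\<bar>-81638284249891/1000000000000000000\<bar> + \<bar>-487353396947/10000000000000000\<bar>)
      + (\<bar>314901977083/200000000000\<bar> + \<bar>1314064937/1000000000\<bar>) * (2/10000)^2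
      + (\<bar>-5072911/2000000\<bar> + \<bar>-985123/25000000\<bar>) * (2/10000)^3
      + (\<bar>-644193/200000\<bar> + \<bar>8773/2000\<bar>) * (2/10000)^4
      + (\<bar>31/20\<bar> + \<bar>849/250\<bar>) * (2/10000)^5 + 1 * (2/10000)^6"
    by (intro add_mono mult_right_mono norm_Complex_le_abs) simp_all
  also have "\<dots> \<le> \<bar>Im (Complex (-3680488814309/4000000000000) (671624212986989/250000000000000))\<bar> * (2/10000)"
    by (simp add: power_divide)
  also have "\<dots> \<le> norm (Complex (-3680488814309/4000000000000) (671624212986989/250000000000000)) * (2/10000)"
    by (intro mult_right_mono abs_Im_le_cmod) simp
  finally show "norm (Complex (-81638284249891/1000000000000000000) (-487353396947/10000000000000000))
      + norm (Complex (314901977083/200000000000) (1314064937/1000000000)) * (2/10000)^2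
      + norm (Complex (-5072911/2000000) (-985123/25000000)) * (2/10000)^3
      + norm (Complex (-644193/200000) (8773/2000)) * (2/10000)^4
      + norm (Complex (31/20) (849/250)) * (2/10000)^5 + norm (1::complex) * (2/10000)^6
    \<le> norm (Complex (-3680488814309/4000000000000) (671624212986989/250000000000000)) * (2/10000)" .
qed (auto simp: complex_eq_iff intro!: continuous_intros)

lemma disc_excluded_centre_425_566:
  "disc_excluded 1048576 425 566 1000 283 400 2 10000 3596616 60 (-207575) 44717 1890"
  by code_simp

lemma norm_z4_minus_z5_near_425_566:
  fixes z :: complex
  assumes ze: "norm (z - Complex (425/1000) (566/1000)) \<le> 2/10000" and z: "norm z \<le> 1"
  shows "norm (z^4 - z^5 - grid_point 1048576 (-207575) 44717) \<le> 1890 / 1048576"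
proof -
  let ?z0 = "Complex (425/1000) (566/1000)"
  let ?e = "Complex (-1583675138749/8000000000000 + 207575/1048576)
                    (21322749654337/500000000000000 - 44717/1048576)"
  have "norm ?z0 \<le> 1"
    using norm_Complex_le_abs[of "425/1000" "566/1000"] by simp
  then have power_diff: "norm (z^k - ?z0^k) \<le> k * (2/10000)" for k
    using norm_power_diff[OF z, of ?z0 k] mult_left_mono[OF ze, of "real k"] by simp
  have "?z0^4 - ?z0^5 = Complex (-1583675138749/8000000000000) (21322749654337/500000000000000)"
    by (simp add: eval_nat_numeral complex_mult complex_eq_iff)
  then have "(?z0^4 - ?z0^5) - grid_point 1048576 (-207575) 44717 = ?e"
    by (simp add: grid_point_def complex_eq_iff)
  then have decomp: "z^4 - z^5 - grid_point 1048576 (-207575) 44717 = (z^4 - ?z0^4) - (z^5 - ?z0^5) + ?e"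
    by (simp add: algebra_simps flip: \<open>_ = ?e\<close>)
  have "norm (z^4 - z^5 - grid_point 1048576 (-207575) 44717)
      \<le> norm (z^4 - ?z0^4) + norm (z^5 - ?z0^5) + norm ?e"
    unfolding decomp by (rule order_trans[OF norm_triangle_ineq add_right_mono[OF norm_triangle_ineq4]])
  also have "\<dots> \<le> 4 * (2/10000) + 5 * (2/10000)
      + (\<bar>-1583675138749/8000000000000 + 207575/1048576\<bar> + \<bar>21322749654337/500000000000000 - 44717/1048576\<bar>)"
    using power_diff[of 4] power_diff[of 5] by (intro add_mono norm_Complex_le_abs) simp_all
  also have "\<dots> \<le> 1890 / 1048576"
    by simp
  finally show ?thesis .
qed

lemma M0set_minus_M1set_nonempty: "\<exists>z. z \<in> M0set \<and> z \<notin> M1set"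
proof -
  let ?z0 = "Complex (425/1000) (566/1000)"
  obtain z where ze: "norm (z - ?z0) \<le> 2/10000" and root: "1 - z + z^2 + z^3 + z^4 - z^5 + z^6 = 0"
    using root_near_425_566 by blast
  have z0: "7077/10000 \<le> norm ?z0" "norm ?z0 \<le> 7079/10000"
    using norm_Complex_between[of "7077/10000" "425/1000" "566/1000" "7079/10000"]
    by (simp_all add: power2_eq_square)
  have lo: "283/400 \<le> norm z" and hi: "norm z \<le> 7081/10000"
    using z0 ze norm_triangle_ineq2[of ?z0 z] norm_triangle_ineq[of ?z0 "z - ?z0"]
    by (simp_all add: norm_minus_commute)
  then have z: "norm z < 1" "z \<noteq> 0"
    by auto
  have zero: "0 \<in> pm_set z"
    using root
    by (intro zero_in_pm_set_if_periodic_root[OF z(1), of 7 "\<lambda>n. n mod 7 \<notin> {1, 5}"])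
       (simp_all add: pm_poly_def lessThan_nat_numeral pm_def algebra_simps)
  define p where "p = z^4 - z^5"
  have "norm (p - grid_point 1048576 (-207575) 44717) \<le> of_int 1890 / of_int 1048576"
    unfolding p_def using norm_z4_minus_z5_near_425_566[OF ze] z(1) by simp
  then have "p \<notin> pm_set z"
  proof (rule disc_excluded_sound[OF _ _ _ _ _ _ _ z _ _ _ _ disc_excluded_centre_425_566, rotated -1])
    show "norm x \<le> of_int 3596616 / of_int 1048576" if "x \<in> pm_set z" for x
      using norm_pm_set_le_of_norm_le[OF hi _ that] by simp
  qed (use ze lo z0 in \<open>simp_all add: grid_point_def\<close>)
  moreover have "pm_poly z (\<lambda>j. j \<in> {1, 4}) 6 + pm_poly z (\<lambda>j. j \<in> {0, 2, 3, 4}) 6 = 2 * p"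
    by (simp add: p_def pm_poly_def lessThan_nat_numeral pm_def)
  moreover have "(\<lambda>s. pm_poly z (\<lambda>j. j \<in> {1, 4}) 6 + z^6 * s) ` pm_set z
      \<inter> (\<lambda>s. pm_poly z (\<lambda>j. j \<in> {0, 2, 3, 4}) 6 + z^6 * s) ` pm_set z \<noteq> {}"
  proof -
    let ?c = "\<lambda>k::nat. k \<noteq> 3" and ?c' = "\<lambda>k::nat. k \<notin> {1, 2, 4}"
    have "pm_series z ?c = pm_poly z ?c 5 + z^5 * pm_series z (\<lambda>_. True)"
      "pm_series z ?c' = pm_poly z ?c' 5 + z^5 * pm_series z (\<lambda>_. True)"
      by (rule pm_series_eventually_True[OF z(1)]; simp)+
    then have "pm_poly z (\<lambda>j. j \<in> {1, 4}) 6 + z^6 * pm_series z ?c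
        = pm_poly z (\<lambda>j. j \<in> {0, 2, 3, 4}) 6 + z^6 * pm_series z ?c'"
      using root by (simp add: pm_poly_def lessThan_nat_numeral pm_def) algebra
    then show ?thesis
      unfolding pm_set_def by blast
  qed
  ultimately have "\<not> full (pm_set z)"
    using not_full_pm_set_if_symmetric_cylinders[OF z(1) connected_pm_set_if_pieces_meet[OF z(1)
        pm_pieces_meet_if_zero[OF z(1) zero]]] by blast
  then show ?thesis
    using z zero by (auto simp: M0set_iff M1set_iff punctured_disc_def)
qed

theorem proposition2p4p1:
  shows "M1set \<subset> M0set \<and> M0set \<subset> Mset"
proof -
  have "M1set \<subseteq> M0set"
    using zero_in_pm_set_if_full punctured_discD(1) by (auto simp: M1set_iff M0set_iff)
  moreover have "M0set \<subseteq> Mset"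
    using connected_pm_set_if_pieces_meet pm_pieces_meet_if_zero punctured_discD(1)
    by (auto simp: M0set_iff Mset_iff)
  ultimately show ?thesis
    using M0set_minus_M1set_nonempty Mset_minus_M0set_nonempty by blast
qed

end
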